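(* Let $s$ be a degree sequence and $G,H\in\mathcal{P}(s)$. Then $\operatorname{cycles}(G)=\kappa(G)$ if and only if $\operatorname{cycles}(H)=\kappa(H)$.
   Context: Graphs are finite, simple, labeled with vertex set $[n]$; the degree sequence of $G$ is $(d_1,\dots,d_n)$ with $d_i$ the degree of vertex $i$. A pseudoforest is a graph each of whose connected components contains at most one cycle; $\mathcal{P}(s)$ is the set of pseudoforests with degree sequence $s$. $\kappa(G)$ is the number of connected components and $\operatorname{cycles}(G)$ the number of subgraphs of $G$ isomorphic to a cycle. *)

theory Defs
  imports Main
begin

text \<open>Simple labeled graphs on the vertex set [n] = {1..n}, given by their edge
  set: a set of 2-element subsets of [n].\<close>

definition vertices :: "nat \<Rightarrow> nat set" where
  "vertices n = {1..n}"

definition simple_graph :: "nat \<Rightarrow> nat set set \<Rightarrow> bool" where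
  "simple_graph n E \<longleftrightarrow> E \<subseteq> {{u, v} | u v. u \<in> vertices n \<and> v \<in> vertices n \<and> u \<noteq> v}"

definition degree :: "nat set set \<Rightarrow> nat \<Rightarrow> nat" where
  "degree E i = card {e \<in> E. i \<in> e}"

definition degree_sequence :: "nat \<Rightarrow> nat set set \<Rightarrow> nat list" where
  "degree_sequence n E = map (degree E) [1..<n+1]"

definition reach :: "nat \<Rightarrow> nat set set \<Rightarrow> (nat \<times> nat) set" where
  "reach n E = ({(u, v). {u, v} \<in> E}\<^sup>*) \<inter> (vertices n \<times> vertices n)"

definition components :: "nat \<Rightarrow> nat set set \<Rightarrow> nat set set" where
  "components n E = vertices n // reach n E"

definition kappa :: "nat \<Rightarrow> nat set set \<Rightarrow> nat" where
  "kappa n E = card (components n E)"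

text \<open>Subgraphs isomorphic to a cycle C_k (k \<ge> 3): such a subgraph is the image of
  an injective map f from {0..<k} with edges {f i, f (i+1 mod k)}; it is determined
  by its edge set (its vertex set being the union of its edges).\<close>
definition cycle_subgraphs :: "nat set set \<Rightarrow> nat set set set" where
  "cycle_subgraphs E = {C. C \<subseteq> E \<and> (\<exists>k f. k \<ge> 3 \<and> inj_on f {0..<k} \<and>
       C = (\<lambda>i. {f i, f (Suc i mod k)}) ` {0..<k})}"

definition cycles :: "nat set set \<Rightarrow> nat" where
  "cycles E = card (cycle_subgraphs E)"

definition pseudoforest :: "nat \<Rightarrow> nat set set \<Rightarrow> bool" where
  "pseudoforest n E \<longleftrightarrow> simple_graph n E \<and>
     (\<forall>X \<in> components n E. card {C \<in> cycle_subgraphs E. \<Union>C \<subseteq> X} \<le> 1)"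

definition pseudoforests_deg :: "nat list \<Rightarrow> nat set set set" where
  "pseudoforests_deg s = {E. pseudoforest (length s) E \<and> degree_sequence (length s) E = s}"

end

theory Submission
  imports Defs "HOL-Library.Transitive_Closure_Table" "HOL-Number_Theory.Cong"
begin

text \<open>In a pseudoforest on n vertices, cycles E + n = card E + kappa n E. Indeed, add the edges
  one at a time: an edge joining two vertices of the same component closes exactly one new
  cycle (at least one by following a path, at most one since the component contains at most
  one cycle), and an edge joining two components lies on no cycle but merges the two
  components. By the handshake lemma, card E is half the sum of the degree sequence, so
  cycles - kappa = card E - n is the same for all pseudoforests with a given degree sequence.\<close>

section \<open>Joining two equivalence classes\<close>

lemma rtrancl_insert_sym_pair:
  fixes r :: "'a rel" and u v :: 'a
  assumes "sym r"
  defines "B \<equiv> r\<^sup>* `` {u} \<union> r\<^sup>* `` {v}"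
  shows "(r \<union> {(u, v), (v, u)})\<^sup>* = r\<^sup>* \<union> B \<times> B"
proof
  have sym_star: "(y, x) \<in> r\<^sup>*" if "(x, y) \<in> r\<^sup>*" for x y
    using that assms(1) by (meson sym_rtrancl symD)
  have B_closed: "y \<in> B" if "x \<in> B" "(x, y) \<in> r\<^sup>* \<or> (y, x) \<in> r\<^sup>*" for x y
  proof -
    have "(x, y) \<in> r\<^sup>*" using that(2) by (auto dest: sym_star)
    with that(1) show ?thesis unfolding B_def by (auto dest: rtrancl_trans)
  qed
  have uv: "u \<in> B" "v \<in> B" by (auto simp: B_def)
  show "(r \<union> {(u, v), (v, u)})\<^sup>* \<subseteq> r\<^sup>* \<union> B \<times> B"
  proof (rule subrelI)
    fix x z assume "(x, z) \<in> (r \<union> {(u, v), (v, u)})\<^sup>*"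
    then show "(x, z) \<in> r\<^sup>* \<union> B \<times> B"
    proof (induction rule: rtrancl_induct)
      case (step y z)
      show ?case
      proof (cases "(y, z) \<in> r")
        case True
        then show ?thesis
          using step.IH B_closed[of y z] by (auto intro: rtrancl_into_rtrancl)
      next
        case False
        then have "y \<in> B" "z \<in> B" using step.hyps(2) uv by auto
        then show ?thesis
          using step.IH B_closed[of y x] by auto
      qed
    qed simp
  qed
  show "r\<^sup>* \<union> B \<times> B \<subseteq> (r \<union> {(u, v), (v, u)})\<^sup>*"
  proof -
    let ?R = "r \<union> {(u, v), (v, u)}"
    have sub: "r\<^sup>* \<subseteq> ?R\<^sup>*" by (rule rtrancl_mono) blast
    have "sym ?R" using assms(1) by (auto simp: sym_def)
    then have sym_R: "(y, x) \<in> ?R\<^sup>*" if "(x, y) \<in> ?R\<^sup>*" for x y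
      using that by (meson sym_rtrancl symD)
    have from_u: "(u, x) \<in> ?R\<^sup>*" if "x \<in> B" for x
    proof -
      have "(v, x) \<in> ?R\<^sup>*" if "(v, x) \<in> r\<^sup>*" using that sub by blast
      moreover have "(u, v) \<in> ?R\<^sup>*" by auto
      ultimately show ?thesis using \<open>x \<in> B\<close> sub unfolding B_def by (auto dest: rtrancl_trans)
    qed
    have "(x, y) \<in> ?R\<^sup>*" if "x \<in> B" "y \<in> B" for x y
      using sym_R[OF from_u[OF that(1)]] from_u[OF that(2)] by (rule rtrancl_trans)
    then show ?thesis using sub by blast
  qed
qed

lemma quotient_merge_classes:
  fixes R :: "'a rel"
  assumes R: "equiv V R" and uv: "u \<in> V" "v \<in> V" "(u, v) \<notin> R"
  defines "B \<equiv> R `` {u} \<union> R `` {v}"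
  shows "V // (R \<union> B \<times> B) = insert B (V // R - {R `` {u}, R `` {v}})"
proof -
  have in_B_iff: "x \<in> B \<longleftrightarrow> R `` {x} \<in> {R `` {u}, R `` {v}}" if "x \<in> V" for x
    using that uv R unfolding B_def by (auto simp: equiv_class_eq_iff[OF R])
  have merged_class: "(R \<union> B \<times> B) `` {x} = (if x \<in> B then B else R `` {x})" if "x \<in> V" for x
  proof (cases "x \<in> B")
    case True
    then have "R `` {x} \<subseteq> B" using in_B_iff[OF that] unfolding B_def by auto
    then show ?thesis using True by auto
  qed auto
  have "u \<in> V \<inter> B" using uv R unfolding B_def by (auto dest: equiv_class_self)
  have "V // (R \<union> B \<times> B) = (\<lambda>x. (R \<union> B \<times> B) `` {x}) ` V"
    by (auto simp: quotient_def)
  also have "\<dots> = insert B ((\<lambda>x. R `` {x}) ` (V - B))"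
    using merged_class \<open>u \<in> V \<inter> B\<close> by auto
  also have "\<dots> = insert B (V // R - {R `` {u}, R `` {v}})"
    using in_B_iff by (auto simp: quotient_def)
  finally show ?thesis .
qed

lemma card_quotient_merge_classes:
  fixes R :: "'a rel"
  assumes R: "equiv V R" and "finite V" and uv: "u \<in> V" "v \<in> V" "(u, v) \<notin> R"
  defines "B \<equiv> R `` {u} \<union> R `` {v}"
  shows "card (V // (R \<union> B \<times> B)) + 1 = card (V // R)"
proof -
  have fin: "finite (V // R)"
    using assms(2) equiv_type[OF R] by (rule finite_quotient)
  have classes: "R `` {u} \<in> V // R" "R `` {v} \<in> V // R" "R `` {u} \<noteq> R `` {v}"
    using uv R by (auto intro: quotientI simp: eq_equiv_class_iff)
  have "B \<notin> V // R"
  proof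
    assume "B \<in> V // R"
    then obtain x where "B = R `` {x}" by (auto elim: quotientE)
    then have "(x, u) \<in> R" "(x, v) \<in> R"
      using uv R unfolding B_def by (auto dest: equiv_class_self)
    then show False using uv(3) R by (meson equivE symD transD)
  qed
  then have "card (insert B (V // R - {R `` {u}, R `` {v}})) = card (V // R) - 2 + 1"
    using fin classes by (simp add: card_Diff_subset)
  moreover have "card (V // R) \<ge> 2"
    using classes card_mono[OF fin, of "{R `` {u}, R `` {v}}"] by auto
  ultimately show ?thesis
    using quotient_merge_classes[OF R uv] unfolding B_def by simp
qed

lemma simple_graph_edgeE:
  assumes "simple_graph n E" "e \<in> E"
  obtains u v where "e = {u, v}" "u \<noteq> v" "u \<in> vertices n" "v \<in> vertices n"
  using assms unfolding simple_graph_def by blast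

lemma simple_graph_edgeD:
  assumes "simple_graph n E" "{u, v} \<in> E"
  shows "u \<noteq> v" "u \<in> vertices n" "v \<in> vertices n"
  using assms by (auto simp: simple_graph_def doubleton_eq_iff)

lemma simple_graph_Union_subset: "simple_graph n E \<Longrightarrow> \<Union>E \<subseteq> vertices n"
  by (auto simp: simple_graph_def)

lemma simple_graph_finite: "simple_graph n E \<Longrightarrow> finite E"
  by (rule finite_subset[of E "Pow (vertices n)"]) (auto simp: simple_graph_def vertices_def)

lemma simple_graph_mono: "simple_graph n E \<Longrightarrow> F \<subseteq> E \<Longrightarrow> simple_graph n F"
  by (auto simp: simple_graph_def)

lemma sum_degree_eq_twice_card:
  assumes sg: "simple_graph n E"
  shows "(\<Sum>i\<in>vertices n. degree E i) = 2 * card E"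
proof -
  have "(\<Sum>i\<in>vertices n. degree E i) = (\<Sum>i\<in>vertices n. \<Sum>e\<in>E. if i \<in> e then 1 else 0)"
    using simple_graph_finite[OF sg] by (simp add: degree_def sum.inter_filter[symmetric])
  also have "\<dots> = (\<Sum>e\<in>E. \<Sum>i\<in>vertices n. if i \<in> e then 1 else 0)"
    by (rule sum.swap)
  also have "\<dots> = (\<Sum>e\<in>E. 2)"
  proof (rule sum.cong)
    fix e assume "e \<in> E"
    then obtain u v where "e = {u, v}" "u \<noteq> v" "u \<in> vertices n" "v \<in> vertices n"
      using simple_graph_edgeE[OF sg] by blast
    then have "{i \<in> vertices n. i \<in> e} = {u, v}" by auto
    then show "(\<Sum>i\<in>vertices n. if i \<in> e then 1 else 0) = 2"
      using \<open>u \<noteq> v\<close> by (simp add: sum.inter_filter[symmetric] vertices_def)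
  qed simp
  finally show ?thesis by simp
qed

lemma sum_list_degree_sequence:
  assumes "simple_graph n E"
  shows "sum_list (degree_sequence n E) = 2 * card E"
proof -
  have "sum_list (degree_sequence n E) = (\<Sum>i\<in>{1..<n + 1}. degree E i)"
    by (simp add: degree_sequence_def sum_set_upt_conv_sum_list_nat[symmetric])
  also have "{1..<n + 1} = vertices n" by (auto simp: vertices_def)
  finally show ?thesis using sum_degree_eq_twice_card[OF assms] by simp
qed

section \<open>Connected components\<close>

definition adj :: "nat set set \<Rightarrow> (nat \<times> nat) set" where
  "adj E = {(u, v). {u, v} \<in> E}"

lemma reach_adj: "reach n E = (adj E)\<^sup>* \<inter> vertices n \<times> vertices n"
  by (simp add: reach_def adj_def)

lemma sym_adj: "sym (adj E)"
  by (auto simp: adj_def sym_def insert_commute)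

lemma adj_mono: "F \<subseteq> E \<Longrightarrow> adj F \<subseteq> adj E"
  by (auto simp: adj_def)

lemma adj_insert_edge: "adj (insert {u, v} F) = adj F \<union> {(u, v), (v, u)}"
  by (auto simp: adj_def doubleton_eq_iff)

lemma rtrancl_adj_sym: "(a, b) \<in> (adj E)\<^sup>* \<Longrightarrow> (b, a) \<in> (adj E)\<^sup>*"
  by (meson sym_adj sym_rtrancl symD)

lemma equiv_reach: "equiv (vertices n) (reach n E)"
  unfolding reach_adj
  by (intro equivI) (auto simp: refl_on_def sym_def trans_def intro: rtrancl_adj_sym rtrancl_trans)

lemma reach_mono: "F \<subseteq> E \<Longrightarrow> reach n F \<subseteq> reach n E"
  unfolding reach_adj by (meson Int_mono adj_mono order_refl rtrancl_mono)

lemma reach_insert_edge: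
  fixes F :: "nat set set"
  assumes "u \<in> vertices n" "v \<in> vertices n"
  defines "B \<equiv> reach n F `` {u} \<union> reach n F `` {v}"
  shows "reach n (insert {u, v} F) = reach n F \<union> B \<times> B"
  using assms unfolding reach_adj adj_insert_edge rtrancl_insert_sym_pair[OF sym_adj] by auto

lemma kappa_insert_edge:
  fixes F :: "nat set set"
  assumes uv: "u \<in> vertices n" "v \<in> vertices n"
  shows "kappa n (insert {u, v} F) + (if (u, v) \<in> reach n F then 0 else 1) = kappa n F"
proof -
  let ?R = "reach n F" and ?B = "reach n F `` {u} \<union> reach n F `` {v}"
  have R: "equiv (vertices n) ?R" by (rule equiv_reach)
  show ?thesis
  proof (cases "(u, v) \<in> ?R")
    case True
    then have "?B \<times> ?B \<subseteq> ?R"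
      using R by (auto simp: equiv_class_eq_iff[OF R] dest: equiv_class_eq[OF R])
    then show ?thesis
      using True reach_insert_edge[OF uv, of F] by (simp add: kappa_def components_def Un_absorb2)
  next
    case False
    have "finite (vertices n)" by (simp add: vertices_def)
    then show ?thesis
      using False card_quotient_merge_classes[OF R _ uv False] reach_insert_edge[OF uv, of F]
      by (simp add: kappa_def components_def)
  qed
qed

lemma kappa_empty: "kappa n {} = n"
proof -
  have "reach n {} = Id_on (vertices n)"
    by (auto simp: reach_adj adj_def Id_on_def)
  moreover have "vertices n // Id_on (vertices n) = (\<lambda>x. {x}) ` vertices n"
    by (auto simp: quotient_def)
  ultimately show ?thesis
    by (simp add: kappa_def components_def card_image vertices_def)
qed

section \<open>Cycles\<close>

definition cycle_edges :: "nat \<Rightarrow> (nat \<Rightarrow> nat) \<Rightarrow> nat set set" where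
  "cycle_edges k f = (\<lambda>i. {f i, f (Suc i mod k)}) ` {0..<k}"

lemma cycle_subgraphs_iff:
  "C \<in> cycle_subgraphs E \<longleftrightarrow> C \<subseteq> E \<and> (\<exists>k f. 3 \<le> k \<and> inj_on f {0..<k} \<and> C = cycle_edges k f)"
  by (simp add: cycle_subgraphs_def cycle_edges_def)

lemma inj_on_rotate:
  fixes k m :: nat
  assumes "inj_on f {0..<k}"
  shows "inj_on (\<lambda>i. f ((i + m) mod k)) {0..<k}"
proof (rule inj_onI)
  fix i j assume ij: "i \<in> {0..<k}" "j \<in> {0..<k}" and "f ((i + m) mod k) = f ((j + m) mod k)"
  moreover have "(i + m) mod k \<in> {0..<k}" "(j + m) mod k \<in> {0..<k}"
    using ij by auto
  ultimately have "(i + m) mod k = (j + m) mod k"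
    using assms by (blast dest: inj_onD)
  then have "i mod k = j mod k"
    using cong_add_rcancel_nat unfolding cong_def by blast
  then show "i = j" using ij by simp
qed

lemma cycle_edges_rotate:
  assumes "0 < k"
  shows "cycle_edges k (\<lambda>i. f ((i + m) mod k)) = cycle_edges k f"
proof -
  let ?rot = "\<lambda>i. (i + m) mod k"
  have "?rot ` {0..<k} = {0..<k}"
    using assms by (intro endo_inj_surj) (auto intro: inj_on_rotate[of id, simplified])
  moreover have "(Suc i mod k + m) mod k = Suc (?rot i) mod k" for i
    by (simp add: mod_Suc_eq mod_add_left_eq)
  ultimately show ?thesis
    unfolding cycle_edges_def by (metis (no_types, lifting) image_cong image_image)
qed

lemma cycle_path_reach:
  assumes k: "3 \<le> k" and inj: "inj_on f {0..<k}" and "i < k"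
  shows "(f 0, f i) \<in> (adj (cycle_edges k f - {{f (k - 1), f 0}}))\<^sup>*"
  using \<open>i < k\<close>
proof (induction i)
  case (Suc i)
  have "{f i, f (Suc i)} \<in> cycle_edges k f"
    using Suc.prems unfolding cycle_edges_def by (auto intro!: image_eqI[of _ _ i])
  moreover have "{f i, f (Suc i)} \<noteq> {f (k - 1), f 0}"
  proof
    assume "{f i, f (Suc i)} = {f (k - 1), f 0}"
    moreover have "f a = f b \<longleftrightarrow> a = b" if "a < k" "b < k" for a b
      using inj that by (auto dest: inj_onD)
    ultimately have "i = k - 1 \<or> (i = 0 \<and> Suc i = k - 1)"
      using Suc.prems k by (auto simp: doubleton_eq_iff)
    then show False using Suc.prems k by auto
  qed
  ultimately have "(f i, f (Suc i)) \<in> adj (cycle_edges k f - {{f (k - 1), f 0}})"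
    by (simp add: adj_def)
  then show ?case using Suc by (auto intro: rtrancl_into_rtrancl)
qed simp

lemma cycle_vertices_connected:
  assumes C: "C \<in> cycle_subgraphs E" and "x \<in> \<Union>C" "y \<in> \<Union>C"
  shows "(x, y) \<in> (adj E)\<^sup>*"
proof -
  obtain k f where k: "3 \<le> k" and inj: "inj_on f {0..<k}" and "C \<subseteq> E" "C = cycle_edges k f"
    using C by (auto simp: cycle_subgraphs_iff)
  then have "(adj (cycle_edges k f - {{f (k - 1), f 0}}))\<^sup>* \<subseteq> (adj E)\<^sup>*"
    by (intro rtrancl_mono adj_mono) blast
  moreover have "\<exists>i<k. z = f i" if z: "z \<in> \<Union>C" for z
  proof -
    obtain i where "i < k" "z = f i \<or> z = f (Suc i mod k)"
      using z \<open>C = cycle_edges k f\<close> by (auto simp: cycle_edges_def)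
    then show ?thesis using k by (metis mod_less_divisor not_numeral_le_zero not_gr_zero)
  qed
  ultimately have from_f0: "(f 0, z) \<in> (adj E)\<^sup>*" if "z \<in> \<Union>C" for z
    using that cycle_path_reach[OF k inj] by blast
  show ?thesis
    using rtrancl_adj_sym[OF from_f0[OF \<open>x \<in> \<Union>C\<close>]] from_f0[OF \<open>y \<in> \<Union>C\<close>] by (rule rtrancl_trans)
qed

lemma cycle_subgraph_in_component:
  assumes "simple_graph n E" "C \<in> cycle_subgraphs E" "u \<in> \<Union>C"
  shows "\<Union>C \<subseteq> reach n E `` {u}"
proof
  fix w assume "w \<in> \<Union>C"
  moreover have "\<Union>C \<subseteq> vertices n"
    using assms(2) simple_graph_Union_subset[OF assms(1)] by (auto simp: cycle_subgraphs_def)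
  ultimately show "w \<in> reach n E `` {u}"
    using cycle_vertices_connected[OF assms(2,3)] assms(3) by (auto simp: reach_adj)
qed

lemma cycle_edge_not_bridge:
  assumes C: "C \<in> cycle_subgraphs E" and e: "{u, v} \<in> C"
  shows "(u, v) \<in> (adj (E - {{u, v}}))\<^sup>*"
proof -
  obtain k f where k: "3 \<le> k" and inj: "inj_on f {0..<k}" and "C \<subseteq> E" "C = cycle_edges k f"
    using C by (auto simp: cycle_subgraphs_iff)
  then obtain j where j: "j < k" "{u, v} = {f j, f (Suc j mod k)}"
    using e by (auto simp: cycle_edges_def)
  \<comment> \<open>rotate the cycle so that the edge {u, v} becomes its closing edge\<close>
  define g where "g i = f ((i + Suc j) mod k)" for i
  have "C = cycle_edges k g"
    using \<open>C = cycle_edges k f\<close> cycle_edges_rotate[of k f "Suc j"] k unfolding g_def by simp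
  moreover have "{g (k - 1), g 0} = {u, v}"
    using j k by (simp add: g_def insert_commute)
  ultimately have "(g 0, g (k - 1)) \<in> (adj (C - {{u, v}}))\<^sup>*"
    using cycle_path_reach[OF k inj_on_rotate[OF inj], of "k - 1" "Suc j"] k unfolding g_def by simp
  moreover have "(adj (C - {{u, v}}))\<^sup>* \<subseteq> (adj (E - {{u, v}}))\<^sup>*"
    using \<open>C \<subseteq> E\<close> by (intro rtrancl_mono adj_mono) blast
  ultimately have "(g 0, g (k - 1)) \<in> (adj (E - {{u, v}}))\<^sup>*" by blast
  then show ?thesis
    using \<open>{g (k - 1), g 0} = {u, v}\<close> rtrancl_adj_sym by (auto simp: doubleton_eq_iff)
qed

lemma cycle_closed_by_edge:
  assumes uv: "{u, v} \<notin> F" "u \<noteq> v" and "(u, v) \<in> (adj F)\<^sup>*"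
  shows "\<exists>C \<in> cycle_subgraphs (insert {u, v} F). {u, v} \<in> C"
proof -
  have "(\<lambda>x y. (x, y) \<in> adj F)\<^sup>*\<^sup>* u v"
    using \<open>(u, v) \<in> (adj F)\<^sup>*\<close> by (simp add: rtranclp_rtrancl_eq)
  then obtain xs' where "rtrancl_path (\<lambda>x y. (x, y) \<in> adj F) u xs' v"
    by (auto simp: rtranclp_eq_rtrancl_path)
  then obtain xs where path: "rtrancl_path (\<lambda>x y. (x, y) \<in> adj F) u xs v" and "distinct (u # xs)"
    by (rule rtrancl_path_distinct)
  define ys where "ys = u # xs"
  define k where "k = length ys"
  have "xs \<noteq> []" using path uv(2) by (auto elim: rtrancl_path.cases)
  have last: "ys ! (k - 1) = v"
    using rtrancl_path_last[OF path \<open>xs \<noteq> []\<close>] \<open>xs \<noteq> []\<close>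
    by (simp add: ys_def k_def last_conv_nth)
  have step: "{ys ! i, ys ! Suc i} \<in> F" if "Suc i < k" for i
    using rtrancl_path_nth[OF path, of i] that by (simp add: ys_def k_def adj_def)
  have "k \<noteq> 2"
  proof
    assume "k = 2"
    then show False using step[of 0] last uv(1) by (simp add: ys_def)
  qed
  then have k: "3 \<le> k" using \<open>xs \<noteq> []\<close> by (cases xs) (auto simp: k_def ys_def Suc_le_eq)
  have closing: "{ys ! (k - 1), ys ! (Suc (k - 1) mod k)} = {v, u}"
    using last k by (simp add: ys_def)
  have "cycle_edges k ((!) ys) \<subseteq> insert {u, v} F"
  proof
    fix e assume "e \<in> cycle_edges k ((!) ys)"
    then obtain i where "i < k" "e = {ys ! i, ys ! (Suc i mod k)}" by (auto simp: cycle_edges_def)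
    then show "e \<in> insert {u, v} F"
    proof (cases "Suc i < k")
      case True
      then show ?thesis using step[of i] \<open>e = {ys ! i, ys ! (Suc i mod k)}\<close> by simp
    next
      case False
      then have "i = k - 1" using \<open>i < k\<close> by simp
      then show ?thesis using closing \<open>e = {ys ! i, ys ! (Suc i mod k)}\<close> by (simp add: insert_commute)
    qed
  qed
  moreover have "inj_on ((!) ys) {0..<k}"
    using \<open>distinct (u # xs)\<close> by (simp add: inj_on_nth ys_def k_def)
  moreover have "{u, v} \<in> cycle_edges k ((!) ys)"
    unfolding cycle_edges_def
  proof (rule image_eqI)
    show "{u, v} = {ys ! (k - 1), ys ! (Suc (k - 1) mod k)}"
      using closing by (simp add: insert_commute)
  qed (use k in simp)
  ultimately have "cycle_edges k ((!) ys) \<in> cycle_subgraphs (insert {u, v} F)"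
    using k unfolding cycle_subgraphs_iff by (intro conjI exI[of _ k] exI[of _ "(!) ys"]) simp_all
  then show ?thesis
    using \<open>{u, v} \<in> cycle_edges k ((!) ys)\<close> by blast
qed

lemma finite_cycle_subgraphs: "finite E \<Longrightarrow> finite (cycle_subgraphs E)"
  by (rule finite_subset[of _ "Pow E"]) (auto simp: cycle_subgraphs_def)

lemma cycles_empty: "cycles {} = 0"
proof -
  have "cycle_subgraphs {} = {}"
    by (auto simp: cycle_subgraphs_iff cycle_edges_def)
  then show ?thesis by (simp add: cycles_def)
qed

lemma cycles_insert:
  assumes "e \<notin> F" "finite F"
  shows "cycles (insert e F) = cycles F + card {C \<in> cycle_subgraphs (insert e F). e \<in> C}"
proof -
  let ?new = "{C \<in> cycle_subgraphs (insert e F). e \<in> C}"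
  have "cycle_subgraphs (insert e F) = cycle_subgraphs F \<union> ?new"
    "cycle_subgraphs F \<inter> ?new = {}"
    using assms(1) by (auto simp: cycle_subgraphs_def)
  moreover have "finite (cycle_subgraphs F)" "finite ?new"
    using assms(2) finite_cycle_subgraphs[of F] finite_cycle_subgraphs[of "insert e F"] by simp_all
  ultimately show ?thesis
    unfolding cycles_def by (metis card_Un_disjoint)
qed

section \<open>Pseudoforests\<close>

lemma pseudoforest_subset:
  assumes pf: "pseudoforest n E" and "F \<subseteq> E"
  shows "pseudoforest n F"
  unfolding pseudoforest_def
proof (intro conjI ballI)
  have sg: "simple_graph n E" using pf by (simp add: pseudoforest_def)
  then show "simple_graph n F" using \<open>F \<subseteq> E\<close> by (rule simple_graph_mono)
  fix X assume "X \<in> components n F"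
  then obtain w where w: "w \<in> vertices n" "X = reach n F `` {w}"
    by (auto simp: components_def elim: quotientE)
  define Y where "Y = reach n E `` {w}"
  have "X \<subseteq> Y" using reach_mono[OF \<open>F \<subseteq> E\<close>] w by (auto simp: Y_def)
  then have "{C \<in> cycle_subgraphs F. \<Union>C \<subseteq> X} \<subseteq> {C \<in> cycle_subgraphs E. \<Union>C \<subseteq> Y}"
    using \<open>F \<subseteq> E\<close> by (auto simp: cycle_subgraphs_def)
  moreover have "finite {C \<in> cycle_subgraphs E. \<Union>C \<subseteq> Y}"
    using finite_cycle_subgraphs[OF simple_graph_finite[OF sg]] by simp
  moreover have "Y \<in> components n E" using w by (auto simp: components_def Y_def intro: quotientI)
  then have "card {C \<in> cycle_subgraphs E. \<Union>C \<subseteq> Y} \<le> 1" using pf by (simp add: pseudoforest_def)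
  ultimately show "card {C \<in> cycle_subgraphs F. \<Union>C \<subseteq> X} \<le> 1"
    by (meson card_mono le_trans)
qed

lemma card_cycles_through_edge:
  assumes pf: "pseudoforest n (insert {u, v} F)" and new: "{u, v} \<notin> F"
  shows "card {C \<in> cycle_subgraphs (insert {u, v} F). {u, v} \<in> C} = (if (u, v) \<in> reach n F then 1 else 0)"
proof -
  let ?E = "insert {u, v} F"
  let ?through = "{C \<in> cycle_subgraphs ?E. {u, v} \<in> C}"
  have sg: "simple_graph n ?E" using pf by (simp add: pseudoforest_def)
  have uv: "u \<noteq> v" "u \<in> vertices n" "v \<in> vertices n"
    using simple_graph_edgeD[OF sg insertI1] by simp_all
  have fin: "finite (cycle_subgraphs ?E)"
    using finite_cycle_subgraphs[OF simple_graph_finite[OF sg]] .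
  show ?thesis
  proof (cases "(u, v) \<in> reach n F")
    case True
    then have "?through \<noteq> {}"
      using cycle_closed_by_edge[OF new uv(1)] by (auto simp: reach_adj)
    moreover have "card ?through \<le> 1"
    proof -
      define X where "X = reach n ?E `` {u}"
      have "?through \<subseteq> {C \<in> cycle_subgraphs ?E. \<Union>C \<subseteq> X}"
        using cycle_subgraph_in_component[OF sg] unfolding X_def by blast
      then have "card ?through \<le> card {C \<in> cycle_subgraphs ?E. \<Union>C \<subseteq> X}"
        using fin by (intro card_mono) simp_all
      also have "\<dots> \<le> 1"
        using pf uv by (auto simp: pseudoforest_def components_def X_def intro: quotientI)
      finally show ?thesis .
    qed
    moreover have "finite ?through" using fin by simp
    ultimately have "card ?through = 1"
      using card_0_eq[of ?through] by linarith
    then show ?thesis using True by simp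
  next
    case False
    have "?through = {}"
    proof (rule ccontr)
      assume "?through \<noteq> {}"
      then have "(u, v) \<in> (adj (?E - {{u, v}}))\<^sup>*"
        using cycle_edge_not_bridge by blast
      then show False using False new uv by (simp add: reach_adj)
    qed
    then show ?thesis using False by (simp only: card.empty if_False)
  qed
qed

lemma pseudoforest_cycles_eq:
  assumes "pseudoforest n E"
  shows "cycles E + n = card E + kappa n E"
proof -
  have "finite E"
    using assms simple_graph_finite unfolding pseudoforest_def by blast
  then show ?thesis
    using assms
  proof (induction E rule: finite_induct)
    case empty
    then show ?case by (simp add: kappa_empty cycles_empty)
  next
    case (insert e F)
    obtain u v where e: "e = {u, v}" "u \<in> vertices n" "v \<in> vertices n"
      using insert.prems by (auto simp: pseudoforest_def elim: simple_graph_edgeE)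
    have "cycles F + n = card F + kappa n F"
      using insert.IH pseudoforest_subset[OF insert.prems] by blast
    then show ?case
      using cycles_insert[OF insert.hyps(2,1)] card_cycles_through_edge[of n u v F]
        kappa_insert_edge[OF e(2,3), of F] insert
      unfolding e by (simp split: if_splits)
  qed
qed

theorem corollary5p3:
  assumes "G \<in> pseudoforests_deg s" and "H \<in> pseudoforests_deg s"
  shows "cycles G = kappa (length s) G \<longleftrightarrow> cycles H = kappa (length s) H"
proof -
  have G: "pseudoforest (length s) G" "degree_sequence (length s) G = s"
    and H: "pseudoforest (length s) H" "degree_sequence (length s) H = s"
    using assms by (simp_all add: pseudoforests_deg_def)
  have "simple_graph (length s) G" "simple_graph (length s) H"
    using G(1) H(1) by (simp_all add: pseudoforest_def)
  then have "2 * card G = 2 * card H"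
    using sum_list_degree_sequence G(2) H(2) by metis
  then show ?thesis
    using pseudoforest_cycles_eq[OF G(1)] pseudoforest_cycles_eq[OF H(1)] by linarith
qed

end
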